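(* Let $a,b\in\mathbb{R}$ with $b\neq0$ and $|a|<1$, let $g\in L^\infty(\mathbb{R})$, and let $f\in L^\infty(\mathbb{R})$ be the solution of $f(x)-af(bx)=g(x)$ (i.e. $M_{a,b}f=g$, where $(M_{a,b}f)(x)=f(x)-af(bx)$). Then: (1) if $b>0$, then $f\in C([0,\infty))$ if and only if $g\in C([0,\infty))$; (2) if $b\ge1$, then $f\in C([1,\infty))$ if and only if $g\in C([1,\infty))$; (3) if $0<b\le1$, then $f\in C([0,1])$ if and only if $g\in C([0,1])$.
   Context: For $X\subseteq\mathbb{R}$, $C(X)$ is the space of bounded uniformly continuous real-valued functions on $X$; a function in $L^\infty(\mathbb{R})$ is said to lie in $C(X)$ if its restriction to $X$ agrees almost everywhere with an element of $C(X)$. *)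

theory Defs
  imports "HOL-Analysis.Analysis"
begin

definition Linfty :: "(real \<Rightarrow> real) \<Rightarrow> bool" where
  "Linfty f \<longleftrightarrow> f \<in> borel_measurable lborel \<and> (\<exists>C. AE x in lborel. \<bar>f x\<bar> \<le> C)"

text \<open>C(X): bounded uniformly continuous real functions on X.\<close>
definition BUC :: "real set \<Rightarrow> (real \<Rightarrow> real) set" where
  "BUC X = {h. uniformly_continuous_on X h \<and> bounded (h ` X)}"

definition in_C :: "(real \<Rightarrow> real) \<Rightarrow> real set \<Rightarrow> bool" where
  "in_C f X \<longleftrightarrow> (\<exists>h\<in>BUC X. AE x in lborel. x \<in> X \<longrightarrow> f x = h x)"

definition M_op :: "real \<Rightarrow> real \<Rightarrow> (real \<Rightarrow> real) \<Rightarrow> real \<Rightarrow> real" where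
  "M_op a b f x = f x - a * f (b * x)"

end

theory Submission
  imports Defs
begin

text \<open>
  If \<open>b X \<subseteq> X\<close>, then \<open>M_op a b\<close> maps \<open>C(X)\<close> into itself, which gives one direction.
  Conversely, for \<open>|a| < 1\<close> the Neumann series \<open>\<Sum>\<^sub>n a\<^sup>n k(b\<^sup>n x)\<close> of a
  \<open>k \<in> C(X)\<close> converges uniformly on \<open>X\<close>, so it lies in \<open>C(X)\<close>; and if \<open>g = k\<close> a.e. on
  \<open>X\<close>, iterating \<open>f(x) = g(x) + a f(bx)\<close> shows that the essentially bounded \<open>f\<close> equals
  this series a.e. on \<open>X\<close>, the remainder \<open>a\<^sup>N f(b\<^sup>N x)\<close> tending to \<open>0\<close>. Since \<open>b \<noteq> 0\<close>,
  the substitution \<open>x \<mapsto> b x\<close> preserves null sets, so all a.e. identities may be rescaled.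
\<close>

lemma AE_lborel_scale:
  fixes c :: real
  assumes "c \<noteq> 0" and "AE x in lborel. P x"
  shows "AE x in lborel. P (c * x)"
proof -
  obtain N where N: "N \<in> null_sets lborel" "{x. \<not> P x} \<subseteq> N"
  proof (rule AE_E[OF assms(2)])
    fix N assume "{x \<in> space lborel. \<not> P x} \<subseteq> N" "emeasure lborel N = 0" "N \<in> sets lborel"
    then show thesis by (intro that null_setsI) auto
  qed
  then have [measurable]: "N \<in> sets borel" by auto
  have "AE x in lborel. 0 + c * x \<notin> N"
    by (rule AE_borel_affine) (use assms(1) N in \<open>auto intro: AE_not_in\<close>)
  then show ?thesis
    by eventually_elim (use N(2) in auto)
qed

lemma scale_power_image_subset:
  fixes b :: real
  assumes "(*) b ` X \<subseteq> X"
  shows "(*) (b ^ n) ` X \<subseteq> X"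
proof (induction n)
  case (Suc n)
  then show ?case using assms by (auto simp: mult.assoc)
qed simp

lemma uniformly_continuous_on_subset:
  fixes h :: "'a::metric_space \<Rightarrow> 'b::metric_space"
  assumes "uniformly_continuous_on T h" and "S \<subseteq> T"
  shows "uniformly_continuous_on S h"
  using assms unfolding uniformly_continuous_on_def by (meson subsetD)

lemma BUC_diff: "f \<in> BUC X \<Longrightarrow> g \<in> BUC X \<Longrightarrow> (\<lambda>x. f x - g x) \<in> BUC X"
  by (simp add: BUC_def uniformly_continuous_on_diff bounded_minus_comp)

lemma BUC_cmult: "f \<in> BUC X \<Longrightarrow> (\<lambda>x. c * f x) \<in> BUC X"
  using bounded_scaleR_comp[of f X c]
  by (simp add: BUC_def uniformly_continuous_on_cmul_left)

lemma BUC_sum: "(\<And>i. i \<in> I \<Longrightarrow> f i \<in> BUC X) \<Longrightarrow> (\<lambda>x. \<Sum>i\<in>I. f i x) \<in> BUC X"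
proof (induction I rule: infinite_finite_induct)
  case (insert i I)
  then show ?case
    by (simp add: BUC_def uniformly_continuous_on_add bounded_plus_comp)
qed (simp_all add: BUC_def uniformly_continuous_on_const image_constant_conv)

lemma BUC_compose_scale:
  assumes "h \<in> BUC X" and sub: "(*) c ` X \<subseteq> X"
  shows "(\<lambda>x. h (c * x)) \<in> BUC X"
proof -
  have "uniformly_continuous_on X ((*) c)"
    by (intro uniformly_continuous_on_cmul_left uniformly_continuous_on_id)
  moreover have "uniformly_continuous_on ((*) c ` X) h"
    using assms(1) sub by (auto simp: BUC_def intro: uniformly_continuous_on_subset)
  ultimately have "uniformly_continuous_on X (\<lambda>x. h (c * x))"
    by (rule uniformly_continuous_on_compose)
  moreover have "(\<lambda>x. h (c * x)) ` X \<subseteq> h ` X"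
    using sub by blast
  then have "bounded ((\<lambda>x. h (c * x)) ` X)"
    using assms(1) by (auto simp: BUC_def intro: bounded_subset)
  ultimately show ?thesis by (simp add: BUC_def)
qed

lemma uniform_limit_BUC:
  assumes lim: "uniform_limit X f l sequentially" and f: "\<And>n. f n \<in> BUC X"
  shows "l \<in> BUC X"
proof -
  have close: "\<exists>n. \<forall>x\<in>X. dist (f n x) (l x) < e" if "e > 0" for e
    using uniform_limitD[OF lim that] by (auto simp: eventually_sequentially)
  have "uniformly_continuous_on X l"
    unfolding uniformly_continuous_on_def
  proof (intro allI impI)
    fix e :: real assume "e > 0"
    then obtain n where n: "\<forall>x\<in>X. dist (f n x) (l x) < e / 3"
      using close[of "e / 3"] by auto
    have "uniformly_continuous_on X (f n)" and "e / 3 > 0"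
      using f[of n] \<open>e > 0\<close> by (simp_all add: BUC_def)
    then obtain d where "d > 0"
      and d: "\<forall>x\<in>X. \<forall>x'\<in>X. dist x' x < d \<longrightarrow> dist (f n x') (f n x) < e / 3"
      unfolding uniformly_continuous_on_def by blast
    have "dist (l x') (l x) < e" if "x \<in> X" "x' \<in> X" "dist x' x < d" for x x'
      by (rule dist_triangle_third[of _ "f n x'" _ "f n x"])
         (use n d that in \<open>auto simp: dist_commute\<close>)
    with \<open>d > 0\<close> show "\<exists>d>0. \<forall>x\<in>X. \<forall>x'\<in>X. dist x' x < d \<longrightarrow> dist (l x') (l x) < e"
      by blast
  qed
  moreover have "bounded (l ` X)"
  proof -
    obtain n where n: "\<forall>x\<in>X. dist (f n x) (l x) < 1"
      using close[of 1] by auto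
    obtain B where B: "\<forall>x\<in>X. \<bar>f n x\<bar> \<le> B"
      using f[of n] by (auto simp: BUC_def bounded_real)
    have "\<bar>l x\<bar> \<le> B + 1" if "x \<in> X" for x
      using n B that by (force simp: dist_real_def)
    then show ?thesis by (auto simp: bounded_real)
  qed
  ultimately show ?thesis by (simp add: BUC_def)
qed

lemma in_C_AE_cong:
  assumes "in_C f X" and "AE x in lborel. x \<in> X \<longrightarrow> f x = g x"
  shows "in_C g X"
proof -
  obtain h where "h \<in> BUC X" and "AE x in lborel. x \<in> X \<longrightarrow> f x = h x"
    using assms(1) unfolding in_C_def by blast
  with assms(2) have "AE x in lborel. x \<in> X \<longrightarrow> g x = h x"
    by eventually_elim auto
  with \<open>h \<in> BUC X\<close> show ?thesis unfolding in_C_def by blast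
qed

lemma BUC_M_op:
  assumes "h \<in> BUC X" and "(*) b ` X \<subseteq> X"
  shows "M_op a b h \<in> BUC X"
  unfolding M_op_def fun_eq_iff[symmetric]
  using assms by (intro BUC_diff BUC_cmult BUC_compose_scale)

lemma in_C_M_op:
  assumes "in_C f X" and "b \<noteq> 0" and "(*) b ` X \<subseteq> X"
  shows "in_C (M_op a b f) X"
proof -
  obtain h where h: "h \<in> BUC X" and fh: "AE x in lborel. x \<in> X \<longrightarrow> f x = h x"
    using assms(1) unfolding in_C_def by blast
  have "AE x in lborel. b * x \<in> X \<longrightarrow> f (b * x) = h (b * x)"
    using AE_lborel_scale[OF assms(2) fh] .
  with fh have "AE x in lborel. x \<in> X \<longrightarrow> M_op a b f x = M_op a b h x"
    by eventually_elim (use assms(3) in \<open>auto simp: M_op_def\<close>)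
  with BUC_M_op[OF h assms(3)] show ?thesis
    unfolding in_C_def by blast
qed

lemma AE_M_op_iterate:
  fixes a b :: real
  assumes "b \<noteq> 0" and "AE x in lborel. M_op a b f x = g x"
  shows "AE x in lborel. f x = (\<Sum>n<N. a ^ n * g (b ^ n * x)) + a ^ N * f (b ^ N * x)"
proof (induction N)
  case (Suc N)
  have "AE x in lborel. M_op a b f (b ^ N * x) = g (b ^ N * x)"
    using AE_lborel_scale[OF _ assms(2), of "b ^ N"] assms(1) by simp
  with Suc show ?case
    by eventually_elim (simp add: M_op_def algebra_simps)
qed simp

definition M_op_inv :: "real \<Rightarrow> real \<Rightarrow> (real \<Rightarrow> real) \<Rightarrow> real \<Rightarrow> real" where
  "M_op_inv a b k x = (\<Sum>n. a ^ n * k (b ^ n * x))"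

lemma uniform_limit_M_op_inv:
  assumes "\<bar>a\<bar> < 1" and "(*) b ` X \<subseteq> X" and "k \<in> BUC X"
  shows "uniform_limit X (\<lambda>N x. \<Sum>n<N. a ^ n * k (b ^ n * x)) (M_op_inv a b k) sequentially"
proof -
  obtain B where B: "\<And>x. x \<in> X \<Longrightarrow> \<bar>k x\<bar> \<le> B"
    using assms(3) by (auto simp: BUC_def bounded_real)
  have "norm (a ^ n * k (b ^ n * x)) \<le> \<bar>a\<bar> ^ n * B" if "x \<in> X" for n x
    unfolding real_norm_def abs_mult power_abs
    using scale_power_image_subset[OF assms(2), of n] that
    by (intro mult_left_mono B) auto
  moreover have "summable (\<lambda>n. \<bar>a\<bar> ^ n * B)"
    using assms(1) by (intro summable_mult2 summable_geometric) simp
  ultimately show ?thesis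
    unfolding M_op_inv_def[abs_def] by (rule Weierstrass_m_test)
qed

lemma BUC_M_op_inv:
  assumes "\<bar>a\<bar> < 1" and "(*) b ` X \<subseteq> X" and "k \<in> BUC X"
  shows "M_op_inv a b k \<in> BUC X"
  using uniform_limit_M_op_inv[OF assms]
proof (rule uniform_limit_BUC)
  fix N
  have "(\<lambda>x. k (b ^ n * x)) \<in> BUC X" for n
    using assms(3) scale_power_image_subset[OF assms(2)] by (rule BUC_compose_scale)
  then show "(\<lambda>x. \<Sum>n<N. a ^ n * k (b ^ n * x)) \<in> BUC X"
    by (intro BUC_sum BUC_cmult)
qed

lemma AE_eq_M_op_inv:
  assumes "b \<noteq> 0" and "\<bar>a\<bar> < 1" and X: "(*) b ` X \<subseteq> X"
    and "Linfty f" and "AE x in lborel. M_op a b f x = g x"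
    and k: "k \<in> BUC X" and gk: "AE x in lborel. x \<in> X \<longrightarrow> g x = k x"
  shows "AE x in lborel. x \<in> X \<longrightarrow> f x = M_op_inv a b k x"
proof -
  obtain C where fC: "AE x in lborel. \<bar>f x\<bar> \<le> C"
    using assms(4) unfolding Linfty_def by blast
  have "AE x in lborel. \<forall>N. \<bar>f (b ^ N * x)\<bar> \<le> C"
    unfolding AE_all_countable using AE_lborel_scale[OF _ fC] assms(1) by simp
  moreover have "AE x in lborel. \<forall>n. b ^ n * x \<in> X \<longrightarrow> g (b ^ n * x) = k (b ^ n * x)"
    unfolding AE_all_countable using AE_lborel_scale[OF _ gk] assms(1) by simp
  moreover have "AE x in lborel. \<forall>N. f x = (\<Sum>n<N. a ^ n * g (b ^ n * x)) + a ^ N * f (b ^ N * x)"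
    unfolding AE_all_countable using AE_M_op_iterate[OF assms(1,5)] by blast
  ultimately show ?thesis
  proof eventually_elim
    case (elim x)
    show ?case
    proof
      assume "x \<in> X"
      then have "b ^ n * x \<in> X" for n
        using scale_power_image_subset[OF X] by blast
      then have "(\<lambda>N. \<Sum>n<N. a ^ n * g (b ^ n * x)) \<longlonglongrightarrow> M_op_inv a b k x"
        using tendsto_uniform_limitI[OF uniform_limit_M_op_inv[OF assms(2) X k] \<open>x \<in> X\<close>]
          elim(2) by simp
      moreover have "(\<lambda>N. a ^ N * f (b ^ N * x)) \<longlonglongrightarrow> 0"
      proof (rule Lim_null_comparison)
        show "\<forall>\<^sub>F N in sequentially. norm (a ^ N * f (b ^ N * x)) \<le> \<bar>a\<bar> ^ N * C"
          unfolding real_norm_def abs_mult power_abs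
          using elim(1) by (intro always_eventually allI mult_left_mono) auto
        show "(\<lambda>N. \<bar>a\<bar> ^ N * C) \<longlonglongrightarrow> 0"
          using assms(2) by (intro tendsto_mult_left_zero LIMSEQ_power_zero) simp
      qed
      ultimately have "(\<lambda>N. (\<Sum>n<N. a ^ n * g (b ^ n * x)) + a ^ N * f (b ^ N * x))
          \<longlonglongrightarrow> M_op_inv a b k x + 0"
        by (rule tendsto_add)
      also have "(\<lambda>N. (\<Sum>n<N. a ^ n * g (b ^ n * x)) + a ^ N * f (b ^ N * x)) = (\<lambda>N. f x)"
        by (rule ext) (rule elim(3)[rule_format, symmetric])
      finally show "f x = M_op_inv a b k x"
        by (simp add: LIMSEQ_const_iff)
    qed
  qed
qed

lemma in_C_iff_of_AE_M_op_eq: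
  assumes "b \<noteq> 0" and "\<bar>a\<bar> < 1" and "(*) b ` X \<subseteq> X"
    and "Linfty f" and "AE x in lborel. M_op a b f x = g x"
  shows "in_C f X \<longleftrightarrow> in_C g X"
proof
  assume "in_C f X"
  then have "in_C (M_op a b f) X"
    using assms(1,3) by (rule in_C_M_op)
  moreover have "AE x in lborel. x \<in> X \<longrightarrow> M_op a b f x = g x"
    using assms(5) by eventually_elim simp
  ultimately show "in_C g X"
    by (rule in_C_AE_cong)
next
  assume "in_C g X"
  then obtain k where "k \<in> BUC X" and "AE x in lborel. x \<in> X \<longrightarrow> g x = k x"
    unfolding in_C_def by blast
  then have "AE x in lborel. x \<in> X \<longrightarrow> f x = M_op_inv a b k x"
    by (intro AE_eq_M_op_inv[OF assms])
  with BUC_M_op_inv[OF assms(2,3) \<open>k \<in> BUC X\<close>] show "in_C f X"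
    unfolding in_C_def by blast
qed

theorem corollary3p7:
  fixes a b :: real and f g :: "real \<Rightarrow> real"
  assumes "b \<noteq> 0" and "\<bar>a\<bar> < 1"
    and "Linfty g" and "Linfty f"
    and "AE x in lborel. M_op a b f x = g x"
  shows "(b > 0 \<longrightarrow> (in_C f {0..} \<longleftrightarrow> in_C g {0..}))
       \<and> (b \<ge> 1 \<longrightarrow> (in_C f {1..} \<longleftrightarrow> in_C g {1..}))
       \<and> (0 < b \<and> b \<le> 1 \<longrightarrow> (in_C f {0..1} \<longleftrightarrow> in_C g {0..1}))"
proof (intro conjI impI)
  note equiv = in_C_iff_of_AE_M_op_eq[OF assms(1,2) _ assms(4,5)]
  show "in_C f {0..} \<longleftrightarrow> in_C g {0..}" if "b > 0"
    using that by (intro equiv) auto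
  show "in_C f {1..} \<longleftrightarrow> in_C g {1..}" if "b \<ge> 1"
    using that mult_mono[of 1 b 1] by (intro equiv) force
  show "in_C f {0..1} \<longleftrightarrow> in_C g {0..1}" if "0 < b \<and> b \<le> 1"
    using that by (intro equiv) (auto intro: mult_le_one)
qed

end
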